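(* Let $A\in\mathbb{R}^{n\times n}$ be symmetric with smallest eigenvalue $\alpha_n$, $g\in\mathbb{R}^n$ nonzero, $\Delta>0$, and let $x_{opt}$ be a global minimizer of $\frac12x^TAx+x^Tg$ subject to $\|x\|\le\Delta$ with multiplier $\lambda_{opt}$, in the easy case $\lambda_{opt}>-\alpha_n$. Suppose $\|x_{opt}\|=\Delta$. Let $M=\begin{pmatrix}-A&gg^T/\Delta^2\\ I&-A\end{pmatrix}$ and let $y=(y_1^T,y_2^T)^T\in\mathbb{R}^{2n}$ ($y_1,y_2\in\mathbb{R}^n$) be a unit-length eigenvector of $M$ associated with $\lambda_{opt}$. Then, with $A_{opt}=A+\lambda_{opt}I$, $$\frac{\|y_1\|}{\|y_2\|}=\frac{\Delta}{\|A_{opt}^{-1}x_{opt}\|}.$$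
   Context: Norms are Euclidean. The multiplier satisfies $\lambda_{opt}\ge0$, $(A+\lambda_{opt}I)x_{opt}=-g$, $\lambda_{opt}(\Delta-\|x_{opt}\|)=0$, $A+\lambda_{opt}I\succeq0$. *)

theory Defs
  imports "HOL-Analysis.Analysis"
begin

definition is_eigenvalue :: "real^'m^'m \<Rightarrow> real \<Rightarrow> bool" where
  "is_eigenvalue B mu \<longleftrightarrow> (\<exists>v. v \<noteq> 0 \<and> B *v v = mu *s v)"

definition is_smallest_eigenvalue :: "real^'m^'m \<Rightarrow> real \<Rightarrow> bool" where
  "is_smallest_eigenvalue B alpha \<longleftrightarrow>
     is_eigenvalue B alpha \<and> (\<forall>mu. is_eigenvalue B mu \<longrightarrow> alpha \<le> mu)"

definition trs_obj :: "real^'n^'n \<Rightarrow> real^'n \<Rightarrow> real^'n \<Rightarrow> real" where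
  "trs_obj A g x = (1/2) * (x \<bullet> (A *v x)) + x \<bullet> g"

text \<open>The 2n x 2n block matrix  M = [[-A, g g^T / Delta^2], [I, -A]],
  indexed by 'n + 'n (Inl = first block, Inr = second block).\<close>
definition blockM :: "real^'n^'n \<Rightarrow> real^'n \<Rightarrow> real \<Rightarrow> real^('n + 'n)^('n + 'n)" where
  "blockM A g Delta = (\<chi> i j. case (i, j) of
       (Inl a, Inl b) \<Rightarrow> - (A $ a $ b)
     | (Inl a, Inr b) \<Rightarrow> (g $ a) * (g $ b) / Delta^2
     | (Inr a, Inl b) \<Rightarrow> (if a = b then 1 else 0)
     | (Inr a, Inr b) \<Rightarrow> - (A $ a $ b))"

definition top_part :: "real^('n + 'n) \<Rightarrow> real^'n" where
  "top_part y = (\<chi> i. y $ Inl i)"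

definition bot_part :: "real^('n + 'n) \<Rightarrow> real^'n" where
  "bot_part y = (\<chi> i. y $ Inr i)"

end

theory Submission
  imports Defs
begin

text \<open>Writing \<open>B = A + \<lambda>I\<close>, the two block rows of \<open>M y = \<lambda> y\<close> say
  \<open>B y\<^sub>1 = (g\<^sup>T y\<^sub>2 / \<Delta>\<^sup>2) g\<close> and \<open>y\<^sub>1 = B y\<^sub>2\<close>. In the easy case \<open>B\<close> is
  invertible, so stationarity \<open>B x\<^sub>o\<^sub>p\<^sub>t = -g\<close> forces \<open>y\<^sub>1 = c x\<^sub>o\<^sub>p\<^sub>t\<close> and
  \<open>y\<^sub>2 = c B\<^sup>-\<^sup>1 x\<^sub>o\<^sub>p\<^sub>t\<close> with the same scalar \<open>c\<close>, which is nonzero because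
  \<open>y \<noteq> 0\<close>; it cancels in the ratio, and \<open>\<parallel>x\<^sub>o\<^sub>p\<^sub>t\<parallel> = \<Delta>\<close>.\<close>

lemma matrix_vector_mult_add_mat:
  fixes A :: "'a::comm_semiring_1^'n^'n"
  shows "(A + mat c) *v v = A *v v + c *s v"
proof -
  have "mat c *v v = c *s v"
    by (simp add: matrix_vector_mult_def mat_def vec_eq_iff if_distrib [of "\<lambda>a. a * _"] cong: if_cong)
  then show ?thesis
    by (simp add: matrix_vector_mult_add_rdistrib)
qed

lemma invertible_add_mat_if_not_eigenvalue:
  fixes A :: "real^'n^'n"
  assumes "\<not> is_eigenvalue A (- c)"
  shows "invertible (A + mat c)"
proof -
  have "v = 0" if "(A + mat c) *v v = 0" for v
  proof (rule ccontr)
    assume "v \<noteq> 0"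
    moreover from that have "A *v v = (- c) *s v"
      by (simp add: matrix_vector_mult_add_mat scalar_mult_eq_scaleR eq_neg_iff_add_eq_0)
    ultimately show False
      using assms unfolding is_eigenvalue_def by blast
  qed
  then show ?thesis
    using matrix_left_invertible_ker invertible_left_inverse by blast
qed

lemma invertible_add_mat_above_smallest_eigenvalue:
  fixes A :: "real^'n^'n"
  assumes "is_smallest_eigenvalue A alpha" and "c > - alpha"
  shows "invertible (A + mat c)"
  using assms by (force simp: is_smallest_eigenvalue_def intro: invertible_add_mat_if_not_eigenvalue)

lemma matrix_inv_mult_cancel:
  fixes B :: "'a::comm_semiring_1^'n^'m"
  assumes "invertible B"
  shows "matrix_inv B *v (B *v v) = v"
proof -
  have "matrix_inv B ** B = mat 1"
    using someI_ex[OF assms[unfolded invertible_def]] unfolding matrix_inv_def by blast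
  then show ?thesis
    by (simp add: matrix_vector_mul_assoc)
qed

lemma sum_UNIV_Plus:
  fixes f :: "'a::finite + 'b::finite \<Rightarrow> 'c::comm_monoid_add"
  shows "sum f UNIV = (\<Sum>a\<in>UNIV. f (Inl a)) + (\<Sum>b\<in>UNIV. f (Inr b))"
  by (subst UNIV_Plus_UNIV[symmetric], subst sum.Plus) auto

lemma top_part_scale [simp]: "top_part (c *s y) = c *s top_part y"
  by (simp add: top_part_def vec_eq_iff)

lemma bot_part_scale [simp]: "bot_part (c *s y) = c *s bot_part y"
  by (simp add: bot_part_def vec_eq_iff)

lemma top_part_zero [simp]: "top_part 0 = 0"
  by (simp add: top_part_def vec_eq_iff)

lemma bot_part_zero [simp]: "bot_part 0 = 0"
  by (simp add: bot_part_def vec_eq_iff)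

lemma vec_eq_iff_top_bot_part:
  "y = z \<longleftrightarrow> top_part y = top_part z \<and> bot_part y = bot_part z"
  by (auto simp: top_part_def bot_part_def vec_eq_iff) (metis sum.exhaust)

lemma top_part_blockM:
  "top_part (blockM A g Delta *v y) = ((g \<bullet> bot_part y) / Delta^2) *s g - A *v top_part y"
  by (simp add: top_part_def bot_part_def blockM_def matrix_vector_mult_def inner_vec_def
      vec_eq_iff sum_UNIV_Plus sum_negf sum_distrib_left sum_divide_distrib mult_ac)

lemma bot_part_blockM:
  "bot_part (blockM A g Delta *v y) = top_part y - A *v bot_part y"
  by (simp add: top_part_def bot_part_def blockM_def matrix_vector_mult_def
      vec_eq_iff sum_UNIV_Plus sum_negf if_distrib if_distribR cong: if_cong)

lemma blockM_eigenvector_iff: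
  "blockM A g Delta *v y = mu *s y \<longleftrightarrow>
     (A + mat mu) *v top_part y = ((g \<bullet> bot_part y) / Delta^2) *s g \<and>
     top_part y = (A + mat mu) *v bot_part y"
  unfolding vec_eq_iff_top_bot_part[of "blockM A g Delta *v y"] top_part_blockM bot_part_blockM
    top_part_scale bot_part_scale matrix_vector_mult_add_mat
  by (auto simp: scalar_mult_eq_scaleR algebra_simps)

lemma blockM_eigenvector_parts:
  fixes A :: "real^'n^'n"
  assumes inv: "invertible (A + mat mu)"
    and stat: "(A + mat mu) *v x = - g"
    and eig: "blockM A g Delta *v y = mu *s y"
  obtains c where "top_part y = c *s x"
    and "bot_part y = c *s (matrix_inv (A + mat mu) *v x)"
proof
  define B where "B = A + mat mu"
  define c where "c = - (g \<bullet> bot_part y) / Delta^2"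
  have top: "B *v top_part y = (- c) *s g" and bot: "top_part y = B *v bot_part y"
    using eig unfolding blockM_eigenvector_iff B_def c_def by auto
  have "B *v top_part y = B *v (c *s x)"
    using top stat unfolding B_def vector_scalar_commute by (simp add: scalar_mult_eq_scaleR)
  then show top_x: "top_part y = c *s x"
    using inj_matrix_vector_mult[OF inv] unfolding B_def by (auto dest: injD)
  have "bot_part y = matrix_inv B *v top_part y"
    using bot matrix_inv_mult_cancel[OF inv] unfolding B_def by simp
  then show "bot_part y = c *s (matrix_inv (A + mat mu) *v x)"
    unfolding top_x B_def by (simp add: vector_scalar_commute)
qed

theorem lemma5p6:
  fixes A :: "real^'n^'n" and g x_opt :: "real^'n"
    and Delta lam alpha :: real and y :: "real^('n + 'n)"
  assumes symA: "transpose A = A"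
    and alpha: "is_smallest_eigenvalue A alpha"
    and g_nz: "g \<noteq> 0"
    and Delta_pos: "Delta > 0"
    and feas: "norm x_opt \<le> Delta"
    and glob_min: "\<forall>x. norm x \<le> Delta \<longrightarrow> trs_obj A g x_opt \<le> trs_obj A g x"
    and lam_nonneg: "lam \<ge> 0"
    and stat: "(A + mat lam) *v x_opt = - g"
    and compl: "lam * (Delta - norm x_opt) = 0"
    and psd: "\<forall>v. 0 \<le> v \<bullet> ((A + mat lam) *v v)"
    and easy: "lam > - alpha"
    and bdry: "norm x_opt = Delta"
    and y_unit: "norm y = 1"
    and y_eig: "blockM A g Delta *v y = lam *s y"
  shows "norm (top_part y) / norm (bot_part y)
           = Delta / norm (matrix_inv (A + mat lam) *v x_opt)"
proof -
  have inv: "invertible (A + mat lam)"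
    using alpha easy by (rule invertible_add_mat_above_smallest_eigenvalue)
  obtain c where top: "top_part y = c *s x_opt"
    and bot: "bot_part y = c *s (matrix_inv (A + mat lam) *v x_opt)"
    using blockM_eigenvector_parts[OF inv stat y_eig] .
  have "c \<noteq> 0"
  proof
    assume "c = 0"
    then have "y = 0"
      using top bot by (simp add: vec_eq_iff_top_bot_part[of y 0])
    with y_unit show False
      by simp
  qed
  then show ?thesis
    using top bot bdry by (simp add: scalar_mult_eq_scaleR)
qed

end
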